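(* Let $n\geq 0$, let $\sigma_1,\ldots,\sigma_{n+1}\in\Sigma^*$ and $L_1,\ldots,L_n\subseteq\Sigma^*$, and let $L=\sigma_{n+1}L_n^*\sigma_nL_{n-1}^*\cdots\sigma_2L_1^*\sigma_1$. Then $$\mathrm{cl}\,\mathrm{conv}\,\xi(L)=\mathrm{cl}\,\mathrm{conv}\Big(\xi(\{\sigma_{n+1}\sigma_n\cdots\sigma_1\})\cup\bigcup_{i=1}^n\Gamma^{-1}_{\sigma_i\sigma_{i-1}\cdots\sigma_1}\big(\mathrm{cl}\,\mathrm{conv}\,\xi(L_i)\big)\Big).$$
   Context: Fix an integer base $r\geq 2$ and a dimension $m\geq 1$. Let $\Sigma=\{0,1,\ldots,r-1\}^m$, $\Sigma^*$ the set of finite words over $\Sigma$, $\epsilon$ the empty word, $|\sigma|$ the length of $\sigma$. For $\sigma=b_1\cdots b_k\in\Sigma^*$ define $\rho(\sigma)=\sum_{i=1}^k r^{i-1}b_i\in\mathbb{N}^m$ ($\rho(\epsilon)=0$). For $\sigma\in\Sigma^*$, $\Gamma_\sigma:\mathbb{R}^m\to\mathbb{R}^m$ is $\Gamma_\sigma(x)=r^{|\sigma|}x+\rho(\sigma)$. For a nonempty word $\sigma$, $\xi(\sigma)=\rho(\sigma)/(1-r^{|\sigma|})$; $\xi$ is undefined on $\epsilon$, and for a language $L$, $\xi(L)=\{\xi(\sigma):\sigma\in L,\ \sigma\neq\epsilon\}$ (so $\xi(\{\epsilon\})=\emptyset$). $\mathrm{cl}$ is closure and $\mathrm{conv}$ convex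 hull in $\mathbb{R}^m$. *)

theory Defs
  imports "HOL-Analysis.Analysis"
begin

text \<open>Letters of the alphabet Sigma = {0,...,r-1}^m are vectors in nat^'m with
  every component below r; words are lists of letters, the first list element being b_1.\<close>

definition Sigma_alph :: "nat \<Rightarrow> (nat ^ 'm) set" where
  "Sigma_alph r = {b. \<forall>j. b $ j < r}"

definition rho :: "nat \<Rightarrow> (nat ^ 'm) list \<Rightarrow> real ^ 'm" where
  "rho r w = (\<chi> j. \<Sum>i<length w. real r ^ i * real ((w ! i) $ j))"

definition Gamma :: "nat \<Rightarrow> (nat ^ 'm) list \<Rightarrow> real ^ 'm \<Rightarrow> real ^ 'm" where
  "Gamma r w x = (real r ^ length w) *\<^sub>R x + rho r w"

definition xi :: "nat \<Rightarrow> (nat ^ 'm) list \<Rightarrow> real ^ 'm" where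
  "xi r w = (1 / (1 - real r ^ length w)) *\<^sub>R rho r w"

definition xi_set :: "nat \<Rightarrow> (nat ^ 'm) list set \<Rightarrow> (real ^ 'm) set" where
  "xi_set r L = {xi r w | w. w \<in> L \<and> w \<noteq> []}"

definition lang_conc :: "'a list set \<Rightarrow> 'a list set \<Rightarrow> 'a list set" where
  "lang_conc A B = {u @ v | u v. u \<in> A \<and> v \<in> B}"

definition lang_star :: "'a list set \<Rightarrow> 'a list set" where
  "lang_star A = {concat ws | ws. set ws \<subseteq> A}"

text \<open>chain_lang s L k = s_(k+1) L_k^* s_k L_(k-1)^* ... s_2 L_1^* s_1\<close>
fun chain_lang :: "(nat \<Rightarrow> 'a list) \<Rightarrow> (nat \<Rightarrow> 'a list set) \<Rightarrow> nat \<Rightarrow> 'a list set" where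
  "chain_lang s L 0 = {s 1}"
| "chain_lang s L (Suc k) =
     lang_conc {s (Suc (Suc k))} (lang_conc (lang_star (L (Suc k))) (chain_lang s L k))"

definition word_prod :: "(nat \<Rightarrow> 'a list) \<Rightarrow> nat \<Rightarrow> 'a list" where
  "word_prod s i = concat (map s (rev [1..<Suc i]))"

end

theory Submission
  imports Defs
begin

(* Write q_w = r^|w| and let G_w = Gamma_w^{-1}, i.e.
   G_w(y) = q_w^{-1} (y - rho(w)).  Then G_{uv} = G_v o G_u, and for a nonempty
   word w the map G_w is the contraction y |-> q_w^{-1} y + (1 - q_w^{-1}) xi(w)
   towards its unique fixed point xi(w).  Write P_i = s_i ... s_1, let K be the
   right-hand side and T = cl conv xi(L) the left-hand side.
   (<=) For c in L, an induction along the chain shows that G_c = l G_{P_{n+1}} + t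
   with t in (1-l) M, where M = conv of the pieces Gamma_{P_i}^{-1}(cl conv xi(L_i)).
   The fixed point xi(c) of G_c is then a convex combination of xi(P_{n+1}) and a
   point of M, hence lies in K (even without taking closures).  The weights are
   handled by the "scaled membership" t in a.M (with 0.M = {0}), which is additive
   over convex sets.
   (>=) Every L contains the words Q v^k P_i with v in L_i, and by rotation
   xi(Q v^k P_i) = G_{P_i}(xi(P_i Q v^k)) tends to G_{P_i}(xi v) as k -> oo.  Since
   G_{P_i} is a continuous affine map and T is closed and convex, G_{P_i} maps
   cl conv xi(L_i) into T, which is what the inclusion needs. *)

section \<open>Arithmetic of the maps rho, Gamma and xi\<close>

lemma rho_Nil [simp]: "rho r [] = 0"
  by (simp add: rho_def vec_eq_iff)

lemma rho_Cons: "rho r (b # w) = (\<chi> j. real (b $ j)) + real r *\<^sub>R rho r w"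
  unfolding rho_def vec_eq_iff
  by (simp only: length_Cons sum.lessThan_Suc_shift) (simp add: sum_distrib_left mult.assoc)

text \<open>rho(uv) = rho(u) + r^|u| rho(v); equivalently Gamma_{uv} = Gamma_u o Gamma_v.\<close>
lemma rho_append: "rho r (u @ v) = rho r u + (real r ^ length u) *\<^sub>R rho r v"
  by (induction u) (simp_all add: rho_Cons algebra_simps)

lemma scale_ge_2:
  assumes "r \<ge> 2" "w \<noteq> []"
  shows "real r ^ length w \<ge> 2"
proof -
  have "(2::real) ^ 1 \<le> 2 ^ length w"
    using assms(2) by (intro power_increasing) (auto simp: Suc_le_eq)
  also have "\<dots> \<le> real r ^ length w"
    using assms(1) by (intro power_mono) auto
  finally show ?thesis by simp
qed

text \<open>xi(w) is characterised by rho(w) = (1 - q_w) xi(w); for w = [] both sides vanish.\<close>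
lemma rho_eq_xi:
  assumes "r \<ge> 2"
  shows "rho r w = (1 - real r ^ length w) *\<^sub>R xi r w"
proof (cases "w = []")
  case False
  then have "1 - real r ^ length w \<noteq> 0" using scale_ge_2[OF assms] by fastforce
  then show ?thesis by (simp add: xi_def)
qed simp

definition Gamma_inv :: "nat \<Rightarrow> (nat ^ 'm) list \<Rightarrow> real ^ 'm \<Rightarrow> real ^ 'm" where
  "Gamma_inv r w y = (1 / real r ^ length w) *\<^sub>R (y - rho r w)"

lemma Gamma_inv_Gamma: "r \<ge> 2 \<Longrightarrow> Gamma_inv r w (Gamma r w y) = y"
  by (simp add: Gamma_inv_def Gamma_def)

lemma Gamma_Gamma_inv: "r \<ge> 2 \<Longrightarrow> Gamma r w (Gamma_inv r w y) = y"
  by (simp add: Gamma_inv_def Gamma_def)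

lemma Gamma_inv_append: "r \<ge> 2 \<Longrightarrow> Gamma_inv r (u @ v) y = Gamma_inv r v (Gamma_inv r u y)"
  by (simp add: Gamma_inv_def rho_append power_add algebra_simps)

lemma Gamma_inv_Nil [simp]: "Gamma_inv r [] y = y"
  by (simp add: Gamma_inv_def)

lemma continuous_Gamma_inv: "continuous_on S (Gamma_inv r w)"
  unfolding Gamma_inv_def by (intro continuous_intros)

lemma Gamma_inv_affine:
  assumes "a + b = 1"
  shows "Gamma_inv r w (a *\<^sub>R x + b *\<^sub>R y) = a *\<^sub>R Gamma_inv r w x + b *\<^sub>R Gamma_inv r w y"
proof -
  have "a *\<^sub>R x + b *\<^sub>R y - rho r w = a *\<^sub>R (x - rho r w) + b *\<^sub>R (y - rho r w)"
    using assms by (simp add: algebra_simps flip: scaleR_add_left)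
  then show ?thesis unfolding Gamma_inv_def by (simp only: scaleR_add_right scaleR_scaleR mult.commute)
qed

lemma Gamma_inv_homothety:
  assumes "r \<ge> 2"
  shows "Gamma_inv r w y =
    (1 / real r ^ length w) *\<^sub>R y + (1 - 1 / real r ^ length w) *\<^sub>R xi r w"
  using assms unfolding Gamma_inv_def rho_eq_xi[OF assms]
  by (simp add: algebra_simps diff_divide_distrib)

lemma Gamma_inv_xi: "r \<ge> 2 \<Longrightarrow> Gamma_inv r w (xi r w) = xi r w"
  by (simp add: Gamma_inv_homothety algebra_simps)

lemma Gamma_inv_fixed_point:
  assumes "r \<ge> 2" "w \<noteq> []" "Gamma_inv r w a = a"
  shows "a = xi r w"
proof -
  define c where "c = 1 / real r ^ length w"
  have "c < 1" using scale_ge_2[OF assms(1,2)] by (simp add: c_def divide_less_eq)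
  have "a = c *\<^sub>R a + (1 - c) *\<^sub>R xi r w"
    using assms(3) Gamma_inv_homothety[OF assms(1), of w a] by (simp add: c_def)
  then have "(1 - c) *\<^sub>R a = (1 - c) *\<^sub>R xi r w" by (simp add: algebra_simps)
  then show ?thesis using \<open>c < 1\<close> by simp
qed

section \<open>Fixed points of composite words\<close>

lemma xi_append:
  assumes "r \<ge> 2" "a @ b \<noteq> []"
  defines "\<alpha> \<equiv> (1 - real r ^ length a) / (1 - real r ^ length a * real r ^ length b)"
  shows "xi r (a @ b) = \<alpha> *\<^sub>R xi r a + (1 - \<alpha>) *\<^sub>R xi r b" and "0 \<le> \<alpha>" and "\<alpha> \<le> 1"
proof -
  define p q where "p = real r ^ length a" and "q = real r ^ length b"
  have p: "p \<ge> 1" and q: "q \<ge> 1" using assms(1) by (simp_all add: p_def q_def)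
  have "p * q \<ge> 2" using scale_ge_2[OF assms(1,2)] by (simp add: p_def q_def power_add)
  then have den: "1 - p * q < 0" by simp
  have "rho r (a @ b) = (1 - p) *\<^sub>R xi r a + (p * (1 - q)) *\<^sub>R xi r b"
    by (simp add: rho_append rho_eq_xi[OF assms(1)] p_def q_def)
  moreover have "1 - \<alpha> = p * (1 - q) / (1 - p * q)"
    using den by (simp add: \<alpha>_def p_def q_def field_simps)
  ultimately show "xi r (a @ b) = \<alpha> *\<^sub>R xi r a + (1 - \<alpha>) *\<^sub>R xi r b"
    unfolding xi_def[of r "a @ b"]
    by (simp add: \<alpha>_def p_def q_def power_add scaleR_add_right divide_inverse mult.commute)
  show "0 \<le> \<alpha>" using p den unfolding \<alpha>_def p_def[symmetric] q_def[symmetric]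
    by (simp add: divide_nonpos_neg)
  show "\<alpha> \<le> 1" using p q den unfolding \<alpha>_def p_def[symmetric] q_def[symmetric]
    by (simp add: divide_le_eq)
qed

lemma xi_rotate:
  assumes "r \<ge> 2" "x @ y \<noteq> []"
  shows "xi r (x @ y) = Gamma_inv r y (xi r (y @ x))"
proof (rule sym, rule Gamma_inv_fixed_point[OF assms])
  show "Gamma_inv r (x @ y) (Gamma_inv r y (xi r (y @ x))) = Gamma_inv r y (xi r (y @ x))"
    using Gamma_inv_xi[OF assms(1), of "y @ x"] by (simp add: Gamma_inv_append[OF assms(1)])
qed

lemma xi_power:
  assumes "r \<ge> 2" "v \<noteq> []"
  shows "xi r (concat (replicate (Suc k) v)) = xi r v"
proof -
  have "Gamma_inv r (concat (replicate k v)) (xi r v) = xi r v" for k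
    by (induction k) (simp_all add: Gamma_inv_append[OF assms(1)] Gamma_inv_xi[OF assms(1)])
  then show ?thesis using assms by (metis Gamma_inv_fixed_point concat_replicate_trivial
        empty_replicate replicate_Suc concat.simps(2) append_is_Nil_conv)
qed

lemma xi_star:
  assumes "r \<ge> 2" "u \<in> lang_star A" "u \<noteq> []"
  shows "xi r u \<in> convex hull (xi_set r A)"
proof -
  have "set ws \<subseteq> A \<Longrightarrow> concat ws \<noteq> [] \<Longrightarrow> xi r (concat ws) \<in> convex hull (xi_set r A)" for ws
  proof (induction ws)
    case (Cons w ws)
    have w: "w \<noteq> [] \<Longrightarrow> xi r w \<in> convex hull (xi_set r A)"
      using Cons.prems by (intro hull_inc) (auto simp: xi_set_def)
    consider "w = []" | "concat ws = []" | "w \<noteq> []" "concat ws \<noteq> []" by blast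
    then show ?case
    proof cases
      case 1
      then show ?thesis using Cons by simp
    next
      case 2
      then have "concat (w # ws) = w" by simp
      then show ?thesis using Cons.prems(2) w by metis
    next
      case 3
      with Cons have ws: "xi r (concat ws) \<in> convex hull (xi_set r A)" by simp
      from 3 have ne: "w @ concat ws \<noteq> []" by simp
      show ?thesis
        using convexD_alt[OF convex_convex_hull ws w[OF 3(1)] xi_append(2,3)[OF assms(1) ne]]
        by (simp add: xi_append(1)[OF assms(1) ne] add.commute)
    qed
  qed simp
  then show ?thesis using assms(2,3) unfolding lang_star_def by blast
qed

lemma tendsto_over_geometric:
  fixes a c q :: real
  assumes "1 < q" "c \<noteq> 0"
  shows "(\<lambda>k. a / (1 - c * q ^ k)) \<longlonglongrightarrow> 0"
proof (rule tendsto_divide_0[OF tendsto_const])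
  have "filterlim (\<lambda>k. - c * q ^ k) at_infinity sequentially"
    using assms by (intro tendsto_mult_filterlim_at_infinity[OF tendsto_const]
        filterlim_realpow_sequentially_gt1) auto
  then have "filterlim (\<lambda>k. 1 + - c * q ^ k) at_infinity sequentially"
    by (rule tendsto_add_filterlim_at_infinity[OF tendsto_const])
  then show "filterlim (\<lambda>k. 1 - c * q ^ k) at_infinity sequentially" by simp
qed

lemma xi_pumping_tendsto:
  assumes "r \<ge> 2" "v \<noteq> []"
  shows "(\<lambda>k. xi r (w @ concat (replicate (Suc k) v))) \<longlonglongrightarrow> xi r v"
proof -
  define p q where "p = real r ^ length w" and "q = real r ^ length v"
  define V where "V k = concat (replicate (Suc k) v)" for k
  define \<alpha> where "\<alpha> k = (1 - p) / (1 - (p * q) * q ^ k)" for k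
  have p: "p \<ge> 1" and q: "q \<ge> 2" using assms scale_ge_2 by (auto simp: p_def q_def)
  have "xi r (w @ V k) = xi r v + \<alpha> k *\<^sub>R (xi r w - xi r v)" for k
  proof -
    have "length (V k) = length v * Suc k"
      by (simp add: V_def length_concat sum_list_replicate)
    then have "real r ^ length (V k) = q ^ Suc k"
      by (simp only: q_def power_mult)
    moreover have "xi r (V k) = xi r v" unfolding V_def by (rule xi_power[OF assms])
    moreover have "w @ V k \<noteq> []" using assms(2) by (simp add: V_def)
    ultimately show ?thesis
      using xi_append(1)[OF assms(1), of w "V k"] by (simp add: \<alpha>_def p_def algebra_simps)
  qed
  moreover have "\<alpha> \<longlonglongrightarrow> 0" unfolding \<alpha>_def using p q by (intro tendsto_over_geometric) auto
  then have "(\<lambda>k. xi r v + \<alpha> k *\<^sub>R (xi r w - xi r v)) \<longlonglongrightarrow> xi r v + 0 *\<^sub>R (xi r w - xi r v)"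
    by (intro tendsto_intros)
  ultimately show ?thesis by (simp add: V_def)
qed

lemma closed_convex_Gamma_inv_vimage:
  assumes "closed T" "convex T"
  shows "closed (Gamma_inv r w -` T)" and "convex (Gamma_inv r w -` T)"
proof -
  show "closed (Gamma_inv r w -` T)"
    by (intro closed_vimage assms(1) continuous_Gamma_inv)
  show "convex (Gamma_inv r w -` T)"
  proof (rule convexI)
    fix x y and a b :: real
    assume "x \<in> Gamma_inv r w -` T" "y \<in> Gamma_inv r w -` T" "0 \<le> a" "0 \<le> b" "a + b = 1"
    then show "a *\<^sub>R x + b *\<^sub>R y \<in> Gamma_inv r w -` T"
      using convexD[OF assms(2)] Gamma_inv_affine[of a b r w x y] by simp
  qed
qed

section \<open>The chain languages\<close>

lemma Nil_in_star: "[] \<in> lang_star A"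
  unfolding lang_star_def by (rule CollectI, rule exI[of _ "[]"]) simp

lemma replicate_in_star: "v \<in> A \<Longrightarrow> concat (replicate k v) \<in> lang_star A"
  unfolding lang_star_def by (rule CollectI, rule exI[of _ "replicate k v"]) auto

lemma chain_lang_SucI:
  "u \<in> lang_star (L (Suc n)) \<Longrightarrow> c \<in> chain_lang s L n \<Longrightarrow>
   s (Suc (Suc n)) @ u @ c \<in> chain_lang s L (Suc n)"
  unfolding chain_lang.simps lang_conc_def by blast

lemma word_prod_Suc: "word_prod s (Suc i) = s (Suc i) @ word_prod s i"
  by (simp add: word_prod_def)

lemma word_prod_1: "word_prod s (Suc 0) = s (Suc 0)"
  by (simp add: word_prod_def)

text \<open>Choosing the empty word from every star gives s_{n+1} ... s_1.\<close>
lemma word_prod_in_chain_lang: "word_prod s (Suc n) \<in> chain_lang s L n"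
proof (induction n)
  case (Suc n)
  from chain_lang_SucI[OF Nil_in_star Suc.IH] show ?case by (simp add: word_prod_Suc[of s "Suc n"])
qed (simp add: word_prod_1)

lemma chain_lang_context:
  assumes "i \<in> {1..n}"
  shows "\<exists>Q. \<forall>u\<in>lang_star (L i). Q @ u @ word_prod s i \<in> chain_lang s L n"
  using assms
proof (induction n)
  case (Suc n)
  show ?case
  proof (cases "i = Suc n")
    case True
    then show ?thesis
      using chain_lang_SucI[OF _ word_prod_in_chain_lang[of s n L]] by (metis word_prod_Suc append_assoc)
  next
    case False
    with Suc obtain Q where Q: "\<forall>u\<in>lang_star (L i). Q @ u @ word_prod s i \<in> chain_lang s L n"
      by auto
    have "(s (Suc (Suc n)) @ Q) @ u @ word_prod s i \<in> chain_lang s L (Suc n)"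
      if "u \<in> lang_star (L i)" for u
      using chain_lang_SucI[OF Nil_in_star, of "Q @ u @ word_prod s i"] Q that by simp
    then show ?thesis by blast
  qed
qed simp

definition chain_pieces ::
  "nat \<Rightarrow> (nat \<Rightarrow> (nat ^ 'm) list) \<Rightarrow> (nat \<Rightarrow> (nat ^ 'm) list set) \<Rightarrow> nat \<Rightarrow> (real ^ 'm) set" where
  "chain_pieces r s L n =
     (\<Union>i\<in>{1..n}. {x. Gamma r (word_prod s i) x \<in> closure (convex hull (xi_set r (L i)))})"

lemma Gamma_inv_star_in_pieces:
  assumes "r \<ge> 2" "i \<in> {1..n}" "u \<in> lang_star (L i)" "u \<noteq> []"
  shows "Gamma_inv r (word_prod s i) (xi r u) \<in> chain_pieces r s L n"
proof -
  have "xi r u \<in> closure (convex hull (xi_set r (L i)))"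
    using xi_star[OF assms(1,3,4)] closure_subset by blast
  then show ?thesis
    unfolding chain_pieces_def using assms(2) by (intro UN_I[of i]) (simp_all add: Gamma_Gamma_inv[OF assms(1)])
qed

text \<open>t \<in> a \<cdot> M, with the convention 0 \<cdot> M = {0} even for empty M.  This bookkeeping lets
  convex combinations be accumulated without dividing by possibly vanishing weights.\<close>
definition scaled_mem :: "'a::real_vector set \<Rightarrow> real \<Rightarrow> 'a \<Rightarrow> bool" where
  "scaled_mem M a t \<longleftrightarrow> (a = 0 \<and> t = 0) \<or> (\<exists>x\<in>M. t = a *\<^sub>R x)"

lemma scaled_mem_scaleR: "a = 0 \<or> x \<in> M \<Longrightarrow> scaled_mem M a (a *\<^sub>R x)"
  unfolding scaled_mem_def by auto

lemma scaled_mem_mono: "M \<subseteq> N \<Longrightarrow> scaled_mem M a t \<Longrightarrow> scaled_mem N a t"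
  unfolding scaled_mem_def by auto

lemma scaled_mem_zero: "scaled_mem M 0 t \<Longrightarrow> t = 0"
  unfolding scaled_mem_def by auto

lemma scaled_mem_add:
  assumes "convex M" "0 \<le> a" "0 \<le> b" "scaled_mem M a t" "scaled_mem M b u"
  shows "scaled_mem M (a + b) (t + u)"
proof -
  consider "a = 0" | "b = 0" | "a > 0" "b > 0" using assms(2,3) by linarith
  then show ?thesis
  proof cases
    case 3
    then obtain x y where xy: "x \<in> M" "y \<in> M" "t = a *\<^sub>R x" "u = b *\<^sub>R y"
      using assms(4,5) unfolding scaled_mem_def by auto
    have "(a / (a + b)) *\<^sub>R x + (b / (a + b)) *\<^sub>R y \<in> M"
      using 3 by (intro convexD[OF assms(1) xy(1,2)]) (auto simp: add_divide_distrib[symmetric])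
    moreover have "t + u = (a + b) *\<^sub>R ((a / (a + b)) *\<^sub>R x + (b / (a + b)) *\<^sub>R y)"
      using 3 by (simp add: xy(3,4) scaleR_add_right)
    ultimately show ?thesis unfolding scaled_mem_def by blast
  next
    case 1
    then have "t = 0" using assms(4) scaled_mem_zero by blast
    then show ?thesis using 1 assms(5) by simp
  next
    case 2
    then have "u = 0" using assms(5) scaled_mem_zero by blast
    then show ?thesis using 2 assms(4) by simp
  qed
qed

lemma scaled_mem_cancel: "a \<noteq> 0 \<Longrightarrow> scaled_mem M a (a *\<^sub>R x) \<Longrightarrow> x \<in> M"
  unfolding scaled_mem_def by auto

section \<open>The inclusion of the left-hand side in the right-hand side\<close>

text \<open>Main invariant: for a chain word c, G_c = l G_{P_{n+1}} + t with t \<in> (1 - l) conv(pieces).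
  The linear parts force l = q_{P_{n+1}} / q_c.\<close>
lemma chain_Gamma_inv_decomposition:
  assumes r: "r \<ge> 2" and "c \<in> chain_lang s L n"
  shows "\<exists>l t. 0 \<le> l \<and> l \<le> 1 \<and> l * real r ^ length c = real r ^ length (word_prod s (Suc n))
    \<and> scaled_mem (convex hull chain_pieces r s L n) (1 - l) t
    \<and> (\<forall>y. Gamma_inv r c y = l *\<^sub>R Gamma_inv r (word_prod s (Suc n)) y + t)"
  using assms(2)
proof (induction n arbitrary: c)
  case 0
  then show ?case by (intro exI[of _ 1] exI[of _ 0]) (simp add: word_prod_1 scaled_mem_def)
next
  case (Suc n)
  let ?P1 = "word_prod s (Suc n)" and ?P2 = "word_prod s (Suc (Suc n))"
  let ?M = "\<lambda>n. convex hull chain_pieces r s L n"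
  from Suc.prems obtain u c' where c: "c = s (Suc (Suc n)) @ u @ c'"
    and u: "u \<in> lang_star (L (Suc n))" and c': "c' \<in> chain_lang s L n"
    by (auto simp: lang_conc_def)
  obtain l t where l: "0 \<le> l" "l \<le> 1" "l * real r ^ length c' = real r ^ length ?P1"
    and t: "scaled_mem (?M n) (1 - l) t" and G: "\<And>y. Gamma_inv r c' y = l *\<^sub>R Gamma_inv r ?P1 y + t"
    using Suc.IH[OF c'] by blast
  define \<mu> where "\<mu> = 1 / real r ^ length u"
  define g where "g = Gamma_inv r ?P1 (xi r u)"
  have \<mu>: "0 < \<mu>" "\<mu> \<le> 1" using r by (auto simp: \<mu>_def)
  have "Gamma_inv r c y = (l * \<mu>) *\<^sub>R Gamma_inv r ?P2 y + ((l * (1 - \<mu>)) *\<^sub>R g + t)" for y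
  proof -
    have "Gamma_inv r c y = Gamma_inv r c' (Gamma_inv r u (Gamma_inv r (s (Suc (Suc n))) y))"
      by (simp add: c Gamma_inv_append[OF r])
    also have "\<dots> = l *\<^sub>R Gamma_inv r ?P1
        (\<mu> *\<^sub>R Gamma_inv r (s (Suc (Suc n))) y + (1 - \<mu>) *\<^sub>R xi r u) + t"
      by (simp only: G Gamma_inv_homothety[OF r, of u] \<mu>_def)
    also have "Gamma_inv r ?P1 (\<mu> *\<^sub>R Gamma_inv r (s (Suc (Suc n))) y + (1 - \<mu>) *\<^sub>R xi r u)
        = \<mu> *\<^sub>R Gamma_inv r ?P2 y + (1 - \<mu>) *\<^sub>R g"
      by (simp add: Gamma_inv_affine g_def word_prod_Suc[of s "Suc n"] Gamma_inv_append[OF r])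
    also have "l *\<^sub>R (\<mu> *\<^sub>R Gamma_inv r ?P2 y + (1 - \<mu>) *\<^sub>R g) + t
        = (l * \<mu>) *\<^sub>R Gamma_inv r ?P2 y + ((l * (1 - \<mu>)) *\<^sub>R g + t)"
      by (simp add: algebra_simps)
    finally show ?thesis .
  qed
  moreover have "scaled_mem (?M (Suc n)) (1 - l * \<mu>) ((l * (1 - \<mu>)) *\<^sub>R g + t)"
  proof -
    have "u \<noteq> [] \<Longrightarrow> g \<in> ?M (Suc n)"
      unfolding g_def
      by (rule hull_inc, rule Gamma_inv_star_in_pieces[where i = "Suc n" and L = L, OF r _ u]) simp_all
    moreover have "u = [] \<Longrightarrow> l * (1 - \<mu>) = 0" by (simp add: \<mu>_def)
    ultimately have g: "scaled_mem (?M (Suc n)) (l * (1 - \<mu>)) ((l * (1 - \<mu>)) *\<^sub>R g)"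
      by (intro scaled_mem_scaleR) blast
    have "?M n \<subseteq> ?M (Suc n)"
      unfolding chain_pieces_def by (intro hull_mono UN_mono) auto
    then have "scaled_mem (?M (Suc n)) (1 - l) t" by (rule scaled_mem_mono[OF _ t])
    with g have sum: "scaled_mem (?M (Suc n)) (l * (1 - \<mu>) + (1 - l)) ((l * (1 - \<mu>)) *\<^sub>R g + t)"
      using l \<mu> by (intro scaled_mem_add[OF convex_convex_hull]) auto
    have "l * (1 - \<mu>) + (1 - l) = 1 - l * \<mu>" by (simp add: algebra_simps)
    with sum show ?thesis by (simp only:)
  qed
  moreover have "(l * \<mu>) * real r ^ length c = real r ^ length ?P2"
    using l(3) r by (simp add: c \<mu>_def word_prod_Suc[of s "Suc n"] power_add field_simps)
  moreover have "0 \<le> l * \<mu>" "l * \<mu> \<le> 1" using l \<mu> by (simp_all add: mult_le_one)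
  ultimately show ?case by (intro exI[of _ "l * \<mu>"] exI[of _ "(l * (1 - \<mu>)) *\<^sub>R g + t"]) simp
qed

lemma xi_chain_in_hull:
  assumes r: "r \<ge> 2" and c: "c \<in> chain_lang s L n" "c \<noteq> []"
  shows "xi r c \<in> convex hull (xi_set r {word_prod s (Suc n)} \<union> chain_pieces r s L n)"
    (is "_ \<in> ?H")
proof -
  let ?P = "word_prod s (Suc n)"
  obtain l t where l: "0 \<le> l" "l \<le> 1" "l * real r ^ length c = real r ^ length ?P"
    and t: "scaled_mem (convex hull chain_pieces r s L n) (1 - l) t"
    and G: "\<And>y. Gamma_inv r c y = l *\<^sub>R Gamma_inv r ?P y + t"
    using chain_Gamma_inv_decomposition[OF r c(1)] by blast
  define x where "x = xi r c"
  define e where "e = 1 / real r ^ length ?P"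
  have e: "0 < e" "e \<le> 1" using r by (auto simp: e_def)
  have le: "l * e = 1 / real r ^ length c" using l(3) r by (simp add: e_def field_simps)
  then have "l * e < 1" using scale_ge_2[OF r c(2)] by (simp add: divide_less_eq)
  have "x = l *\<^sub>R (e *\<^sub>R x + (1 - e) *\<^sub>R xi r ?P) + t"
    using G[of x] Gamma_inv_xi[OF r, of c] Gamma_inv_homothety[OF r, of ?P x]
    by (simp add: x_def e_def)
  then have fixed: "(1 - l * e) *\<^sub>R x = (l * (1 - e)) *\<^sub>R xi r ?P + t"
    by (simp add: algebra_simps)
  have "?P = [] \<Longrightarrow> l * (1 - e) = 0" by (simp add: e_def)
  moreover have "?P \<noteq> [] \<Longrightarrow> xi r ?P \<in> ?H" by (intro hull_inc) (auto simp: xi_set_def)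
  ultimately have "scaled_mem ?H (l * (1 - e)) ((l * (1 - e)) *\<^sub>R xi r ?P)"
    by (intro scaled_mem_scaleR) blast
  moreover have "scaled_mem ?H (1 - l) t"
    by (rule scaled_mem_mono[OF hull_mono t]) blast
  ultimately have "scaled_mem ?H (l * (1 - e) + (1 - l)) ((l * (1 - e)) *\<^sub>R xi r ?P + t)"
    using l e by (intro scaled_mem_add[OF convex_convex_hull]) auto
  moreover have "l * (1 - e) + (1 - l) = 1 - l * e" by (simp add: algebra_simps)
  ultimately have "scaled_mem ?H (1 - l * e) ((1 - l * e) *\<^sub>R x)" by (simp only: fixed)
  then have "x \<in> ?H" by (rule scaled_mem_cancel[rotated]) (use \<open>l * e < 1\<close> in simp)
  then show ?thesis by (simp add: x_def)
qed

section \<open>The inclusion of the right-hand side in the left-hand side\<close>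

lemma Gamma_inv_pieces_in_chain_hull:
  assumes r: "r \<ge> 2" and i: "i \<in> {1..n}"
  shows "Gamma_inv r (word_prod s i) ` closure (convex hull (xi_set r (L i)))
    \<subseteq> closure (convex hull (xi_set r (chain_lang s L n)))"
    (is "?G ` _ \<subseteq> ?T")
proof -
  obtain Q where Q: "\<And>u. u \<in> lang_star (L i) \<Longrightarrow> Q @ u @ word_prod s i \<in> chain_lang s L n"
    using chain_lang_context[OF i] by blast
  have "xi_set r (L i) \<subseteq> ?G -` ?T"
  proof
    fix z assume "z \<in> xi_set r (L i)"
    then obtain v where v: "z = xi r v" "v \<in> L i" "v \<noteq> []" unfolding xi_set_def by blast
    define W where "W k = concat (replicate (Suc k) v)" for k
    have "(\<lambda>k. xi r (word_prod s i @ Q @ W k)) \<longlonglongrightarrow> z"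
      using xi_pumping_tendsto[OF r v(3), of "word_prod s i @ Q"]
      by (simp only: W_def v(1) append_assoc)
    then have lim: "(\<lambda>k. ?G (xi r (word_prod s i @ Q @ W k))) \<longlonglongrightarrow> ?G z"
      unfolding Gamma_inv_def by (intro tendsto_intros)
    have "?G (xi r (word_prod s i @ Q @ W k)) \<in> ?T" for k
    proof -
      have ne: "Q @ W k @ word_prod s i \<noteq> []" using v(3) by (simp add: W_def)
      have "Q @ W k @ word_prod s i \<in> chain_lang s L n"
        unfolding W_def by (rule Q[OF replicate_in_star[OF v(2)]])
      with ne have "xi r (Q @ W k @ word_prod s i) \<in> xi_set r (chain_lang s L n)"
        unfolding xi_set_def by blast
      then have "xi r (Q @ W k @ word_prod s i) \<in> ?T"
        by (intro subsetD[OF closure_subset] hull_inc)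
      then show ?thesis using xi_rotate[OF r, of "Q @ W k" "word_prod s i"] ne by simp
    qed
    from closed_sequentially[OF closed_closure this lim] show "z \<in> ?G -` ?T" by simp
  qed
  then have "closure (convex hull (xi_set r (L i))) \<subseteq> ?G -` ?T"
    using closed_convex_Gamma_inv_vimage[OF closed_closure convex_closure[OF convex_convex_hull]]
    by (intro closure_minimal hull_minimal)
  then show ?thesis by blast
qed

lemma chain_pieces_subset_hull:
  assumes r: "r \<ge> 2"
  shows "chain_pieces r s L n \<subseteq> closure (convex hull (xi_set r (chain_lang s L n)))"
proof
  fix x assume "x \<in> chain_pieces r s L n"
  then obtain i where i: "i \<in> {1..n}"
    and x: "Gamma r (word_prod s i) x \<in> closure (convex hull (xi_set r (L i)))"
    unfolding chain_pieces_def by blast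
  have "x = Gamma_inv r (word_prod s i) (Gamma r (word_prod s i) x)"
    by (simp add: Gamma_inv_Gamma[OF r])
  then show "x \<in> closure (convex hull (xi_set r (chain_lang s L n)))"
    using Gamma_inv_pieces_in_chain_hull[OF r i] x by blast
qed

theorem proposition2:
  fixes r n :: nat
    and s :: "nat \<Rightarrow> (nat ^ 'm) list"
    and L :: "nat \<Rightarrow> (nat ^ 'm) list set"
  assumes "r \<ge> 2"
    and "\<forall>i\<in>{1..n+1}. set (s i) \<subseteq> Sigma_alph r"
    and "\<forall>i\<in>{1..n}. L i \<subseteq> lists (Sigma_alph r)"
  shows "closure (convex hull (xi_set r (chain_lang s L n))) =
         closure (convex hull (xi_set r {word_prod s (n+1)} \<union>
           (\<Union>i\<in>{1..n}. {x. Gamma r (word_prod s i) x \<in> closure (convex hull (xi_set r (L i)))})))"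
proof -
  have r: "r \<ge> 2" by (rule assms(1))
  let ?P = "word_prod s (Suc n)"
  let ?T = "closure (convex hull (xi_set r (chain_lang s L n)))"
  let ?H = "convex hull (xi_set r {?P} \<union> chain_pieces r s L n)"
  have "xi_set r (chain_lang s L n) \<subseteq> ?H"
  proof
    fix x assume "x \<in> xi_set r (chain_lang s L n)"
    then obtain c where "x = xi r c" "c \<in> chain_lang s L n" "c \<noteq> []" unfolding xi_set_def by blast
    then show "x \<in> ?H" using xi_chain_in_hull[OF r] by simp
  qed
  then have "?T \<subseteq> closure ?H"
    by (intro closure_mono hull_minimal convex_convex_hull)
  moreover have "xi_set r {?P} \<subseteq> ?T"
    using word_prod_in_chain_lang[of s n L] closure_subset hull_subset
    unfolding xi_set_def by fast
  then have "closure ?H \<subseteq> ?T"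
    using chain_pieces_subset_hull[OF r]
    by (intro closure_minimal hull_minimal Un_least closed_closure convex_closure convex_convex_hull)
  ultimately show ?thesis unfolding chain_pieces_def by simp
qed

end
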